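(* There exist (connected) bipartite graphs $G$ and integers $k$ with $k-1\ge\chi(G)$ for which $\mathrm{sn}(G,k)<\mathrm{sn}(G,k-1)$; that is, $\mathrm{sn}(G,k)$ is not in general monotone non-decreasing in $k$.
   Context: All graphs are finite and simple. For a graph $G=(V,E)$ and an integer $k\ge\chi(G)$, a proper $k$-colouring is a map $c:V\to[k]$ with $c(u)\neq c(v)$ for every edge $uv$. $\mathrm{sn}(G,k)$ is the minimum number of vertices of $G$ that have to be coloured in a partial colouring such that there exists a unique proper $k$-colouring of $G$ extending it. *)

theory Defs
  imports Main
begin

definition simple_graph :: "'a set \<Rightarrow> 'a set set \<Rightarrow> bool" where
  "simple_graph V E \<longleftrightarrow> finite V \<and>
     (\<forall>e\<in>E. \<exists>u v. u \<noteq> v \<and> u \<in> V \<and> v \<in> V \<and> e = {u, v})"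

definition connected_graph :: "'a set \<Rightarrow> 'a set set \<Rightarrow> bool" where
  "connected_graph V E \<longleftrightarrow> V \<noteq> {} \<and>
     (\<forall>u\<in>V. \<forall>v\<in>V. (\<lambda>x y. {x, y} \<in> E)\<^sup>*\<^sup>* u v)"

definition bipartite_graph :: "'a set \<Rightarrow> 'a set set \<Rightarrow> bool" where
  "bipartite_graph V E \<longleftrightarrow> (\<exists>A B. A \<union> B = V \<and> A \<inter> B = {} \<and>
     (\<forall>u v. {u, v} \<in> E \<longrightarrow> (u \<in> A \<and> v \<in> B) \<or> (u \<in> B \<and> v \<in> A)))"

text \<open>A proper k-colouring c : V -> [k] = {1..k}; outside V it is fixed to 0 so that
  colourings are identified with their restriction to V.\<close>
definition proper_colouring :: "'a set \<Rightarrow> 'a set set \<Rightarrow> nat \<Rightarrow> ('a \<Rightarrow> nat) \<Rightarrow> bool" where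
  "proper_colouring V E k c \<longleftrightarrow> (\<forall>v\<in>V. c v \<in> {1..k}) \<and> (\<forall>v. v \<notin> V \<longrightarrow> c v = 0) \<and>
     (\<forall>u v. {u, v} \<in> E \<longrightarrow> c u \<noteq> c v)"

definition chromatic_number :: "'a set \<Rightarrow> 'a set set \<Rightarrow> nat" where
  "chromatic_number V E = (LEAST k. \<exists>c. proper_colouring V E k c)"

definition sn :: "'a set \<Rightarrow> 'a set set \<Rightarrow> nat \<Rightarrow> nat" where
  "sn V E k = (LEAST n. \<exists>S p. S \<subseteq> V \<and> card S = n \<and>
      (\<exists>!c. proper_colouring V E k c \<and> (\<forall>v\<in>S. c v = p v)))"

end

theory Submission
  imports Defs
begin

text \<open>
  The example is the crown graph for n = 6: left vertices i < n, right vertices n + j for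
  j < n, and i adjacent to n + j iff i and j differ.

  Colouring the left side with 1, ..., n forces the colour of every right vertex, so
  sn(G, n) <= n. For the lower bound let S, with |S| <= n, be a defining set of a proper
  k-colouring, where k < n and n + 4 <= 2k. An uncoloured vertex sees every other colour
  (otherwise recolour it), and S meets every pair of colour classes (otherwise swap the two
  colours). Call an index i matched if i and n + i have the same colour; that colour then
  occurs nowhere else. As k < n some index is unmatched, and its left colour never occurs on
  the right, so no matched vertex is uncoloured. If both sides contain uncoloured vertices,
  all unmatched left vertices share a colour x and all unmatched right vertices a colour y, so
  k <= m + 2 for m matched indices. Then at most 2(n - m) <= n vertices are uncoloured, which
  forces all vertices coloured x or y to be uncoloured, and swapping x and y contradicts
  uniqueness. If one side is entirely coloured, the other is entirely uncoloured, so all but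
  one colour occur twice on the coloured side and 2(k - 1) <= n.
\<close>

section \<open>Defining sets\<close>

definition defining_set :: "'a set \<Rightarrow> 'a set set \<Rightarrow> nat \<Rightarrow> 'a set \<Rightarrow> ('a \<Rightarrow> nat) \<Rightarrow> bool" where
  "defining_set V E k S c \<longleftrightarrow> S \<subseteq> V \<and> proper_colouring V E k c \<and>
     (\<forall>c'. proper_colouring V E k c' \<longrightarrow> (\<forall>v\<in>S. c' v = c v) \<longrightarrow> c' = c)"

lemma defining_setD:
  assumes "defining_set V E k S c"
  shows "S \<subseteq> V" and "proper_colouring V E k c"
    and "proper_colouring V E k c' \<Longrightarrow> \<forall>v\<in>S. c' v = c v \<Longrightarrow> c' = c"
  using assms unfolding defining_set_def by blast+

lemma defining_set_unique_extension:
  "defining_set V E k S c \<Longrightarrow> \<exists>!c'. proper_colouring V E k c' \<and> (\<forall>v\<in>S. c' v = c v)"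
  unfolding defining_set_def by blast

lemma unique_extension_defining_set:
  assumes "S \<subseteq> V" and "\<exists>!c. proper_colouring V E k c \<and> (\<forall>v\<in>S. c v = p v)"
  obtains c where "defining_set V E k S c"
proof -
  from assms(2) obtain c where c: "proper_colouring V E k c \<and> (\<forall>v\<in>S. c v = p v)"
    and unique: "\<forall>c'. proper_colouring V E k c' \<and> (\<forall>v\<in>S. c' v = p v) \<longrightarrow> c' = c"
    by (rule ex1E)
  have "defining_set V E k S c"
    unfolding defining_set_def
  proof (intro conjI allI impI)
    fix c' assume "proper_colouring V E k c'" "\<forall>v\<in>S. c' v = c v"
    then have "proper_colouring V E k c' \<and> (\<forall>v\<in>S. c' v = p v)"
      using c by simp
    then show "c' = c"
      using unique by blast
  qed (use assms(1) c in auto)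
  then show thesis ..
qed

lemma sn_le_defining_set:
  assumes "defining_set V E k S c"
  shows "sn V E k \<le> card S"
  unfolding sn_def
proof (rule Least_le, intro exI conjI)
  show "S \<subseteq> V"
    using assms by (rule defining_setD)
  show "\<exists>!c'. proper_colouring V E k c' \<and> (\<forall>v\<in>S. c' v = c v)"
    using assms by (rule defining_set_unique_extension)
qed simp

lemma defining_set_of_all_vertices:
  assumes c: "proper_colouring V E k c"
  shows "defining_set V E k V c"
  unfolding defining_set_def
proof (intro conjI allI impI)
  fix c' assume c': "proper_colouring V E k c'" and agree: "\<forall>v\<in>V. c' v = c v"
  show "c' = c"
  proof
    fix v
    show "c' v = c v"
      using c c' agree unfolding proper_colouring_def by (cases "v \<in> V") auto
  qed
qed (use c in simp_all)

lemma sn_attained: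
  assumes "proper_colouring V E k c0"
  obtains S c where "defining_set V E k S c" "card S = sn V E k"
proof -
  let ?P = "\<lambda>m. \<exists>S p. S \<subseteq> V \<and> card S = m \<and> (\<exists>!c. proper_colouring V E k c \<and> (\<forall>v\<in>S. c v = p v))"
  have "\<exists>!c. proper_colouring V E k c \<and> (\<forall>v\<in>V. c v = c0 v)"
    by (rule defining_set_unique_extension[OF defining_set_of_all_vertices[OF assms]])
  then have "?P (card V)"
    by (intro exI[of _ V] exI[of _ c0]) simp
  then have "?P (sn V E k)"
    unfolding sn_def by (rule LeastI)
  then obtain S p where S: "S \<subseteq> V" "card S = sn V E k"
    and unique: "\<exists>!c. proper_colouring V E k c \<and> (\<forall>v\<in>S. c v = p v)"
    by (elim exE conjE)
  obtain c where "defining_set V E k S c"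
    using unique_extension_defining_set[OF S(1) unique] .
  then show thesis
    using that S(2) by blast
qed

lemma defining_set_free_vertex_sees_all_colours:
  assumes def: "defining_set V E k S c" and G: "simple_graph V E"
    and u: "u \<in> V" "u \<notin> S" and x: "x \<in> {1..k}" "x \<noteq> c u"
  shows "\<exists>w. {u, w} \<in> E \<and> c w = x"
proof (rule ccontr)
  assume unseen: "\<nexists>w. {u, w} \<in> E \<and> c w = x"
  have c: "proper_colouring V E k c"
    using def by (rule defining_setD)
  have no_loop: "{u, u} \<notin> E"
    using G unfolding simple_graph_def by (metis doubleton_eq_iff)
  have "proper_colouring V E k (c(u := x))"
    using c u x unseen no_loop unfolding proper_colouring_def
    by (auto simp: insert_commute)
  moreover have "\<forall>v\<in>S. (c(u := x)) v = c v"
    using u by simp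
  ultimately have "c(u := x) = c"
    by (rule defining_setD(3)[OF def])
  then show False
    using x by (metis fun_upd_same)
qed

lemma defining_set_meets_colour_pair:
  assumes def: "defining_set V E k S c" and xy: "x \<in> {1..k}" "y \<in> {1..k}" "x \<noteq> y"
    and v: "v \<in> V" "c v = x"
  shows "\<exists>s\<in>S. c s \<in> {x, y}"
proof (rule ccontr)
  assume avoid: "\<not> (\<exists>s\<in>S. c s \<in> {x, y})"
  have c: "proper_colouring V E k c"
    using def by (rule defining_setD)
  have "proper_colouring V E k (id(x := y, y := x) \<circ> c)"
    unfolding proper_colouring_def
  proof (intro conjI allI impI ballI)
    fix w assume "w \<in> V"
    then show "(id(x := y, y := x) \<circ> c) w \<in> {1..k}"
      using c xy unfolding proper_colouring_def by simp
  next
    fix w assume "w \<notin> V"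
    then show "(id(x := y, y := x) \<circ> c) w = 0"
      using c xy unfolding proper_colouring_def by auto
  next
    fix u w assume "{u, w} \<in> E"
    then have "c u \<noteq> c w"
      using c unfolding proper_colouring_def by blast
    then show "(id(x := y, y := x) \<circ> c) u \<noteq> (id(x := y, y := x) \<circ> c) w"
      by auto
  qed
  moreover have "\<forall>s\<in>S. (id(x := y, y := x) \<circ> c) s = c s"
    using avoid by auto
  ultimately have "id(x := y, y := x) \<circ> c = c"
    by (rule defining_setD(3)[OF def])
  then show False
    using v xy by (metis comp_apply fun_upd_other fun_upd_same)
qed

section \<open>Crown graphs\<close>

definition crown_vertices :: "nat \<Rightarrow> nat set" where
  "crown_vertices n = {..<2 * n}"

definition crown_edges :: "nat \<Rightarrow> nat set set" where
  "crown_edges n = {{i, n + j} | i j. i < n \<and> j < n \<and> i \<noteq> j}"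

lemma crown_edge_iff:
  "{u, w} \<in> crown_edges n \<longleftrightarrow>
     (\<exists>i j. i < n \<and> j < n \<and> i \<noteq> j \<and> (u = i \<and> w = n + j \<or> u = n + j \<and> w = i))"
  unfolding crown_edges_def by (auto simp: doubleton_eq_iff)

lemma crown_edge [simp]:
  "i < n \<Longrightarrow> j < n \<Longrightarrow> {i, n + j} \<in> crown_edges n \<longleftrightarrow> i \<noteq> j"
  by (auto simp: crown_edge_iff)

lemma crown_simple: "simple_graph (crown_vertices n) (crown_edges n)"
  unfolding simple_graph_def
proof (intro conjI ballI)
  show "finite (crown_vertices n)"
    unfolding crown_vertices_def by simp
  fix e assume "e \<in> crown_edges n"
  then obtain i j where "i < n" "j < n" "e = {i, n + j}"
    unfolding crown_edges_def by blast
  then show "\<exists>u v. u \<noteq> v \<and> u \<in> crown_vertices n \<and> v \<in> crown_vertices n \<and> e = {u, v}"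
    unfolding crown_vertices_def by (intro exI[of _ i] exI[of _ "n + j"]) auto
qed

lemma crown_bipartite: "bipartite_graph (crown_vertices n) (crown_edges n)"
  unfolding bipartite_graph_def
proof (intro exI conjI allI impI)
  show "{..<n} \<union> {n..<2 * n} = crown_vertices n"
    unfolding crown_vertices_def by auto
  fix u v assume "{u, v} \<in> crown_edges n"
  then show "u \<in> {..<n} \<and> v \<in> {n..<2 * n} \<or> u \<in> {n..<2 * n} \<and> v \<in> {..<n}"
    by (auto simp: crown_edge_iff)
qed auto

lemma crown_connected:
  assumes "3 \<le> n"
  shows "connected_graph (crown_vertices n) (crown_edges n)"
proof -
  let ?R = "\<lambda>x y. {x, y} \<in> crown_edges n"
  have sym: "symp ?R\<^sup>*\<^sup>*"
    by (rule symp_rtranclp) (simp add: symp_def insert_commute)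
  have right: "?R i (n + j)" "?R (n + j) i" if "i < n" "j < n" "i \<noteq> j" for i j
    using that by (simp_all add: insert_commute)
  have reach: "?R\<^sup>*\<^sup>* 0 v" if "v \<in> crown_vertices n" for v
  proof (cases "v < n")
    case True
    define j :: nat where "j = (if v = 1 then 2 else 1)"
    have "j < n" "j \<noteq> 0" "j \<noteq> v"
      using assms True unfolding j_def by auto
    then have "?R 0 (n + j)" "?R (n + j) v"
      using True right by auto
    then show ?thesis
      by (rule rtranclp.rtrancl_into_rtrancl[OF r_into_rtranclp])
  next
    case False
    define j where "j = v - n"
    have j: "j < n" "v = n + j"
      using False that unfolding crown_vertices_def j_def by auto
    show ?thesis
    proof (cases "j = 0")
      case True
      have "?R 0 (n + 1)" "?R (n + 1) 2" "?R 2 (n + 0)"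
        by (rule right; use assms in simp)+
      then have "?R\<^sup>*\<^sup>* 0 (n + 0)"
        by (rule rtranclp.rtrancl_into_rtrancl[OF rtranclp.rtrancl_into_rtrancl[OF r_into_rtranclp]])
      then show ?thesis
        using j True by simp
    next
      case False
      then show ?thesis
        using j right by (simp add: r_into_rtranclp)
    qed
  qed
  show ?thesis
    unfolding connected_graph_def
  proof (intro conjI ballI)
    have "0 \<in> crown_vertices n"
      using assms unfolding crown_vertices_def by simp
    then show "crown_vertices n \<noteq> {}"
      by blast
    fix u v assume "u \<in> crown_vertices n" "v \<in> crown_vertices n"
    then show "?R\<^sup>*\<^sup>* u v"
      using reach sym by (meson rtranclp_trans sympD)
  qed
qed

lemma crown_two_colouring:
  assumes "2 \<le> k"
  shows "proper_colouring (crown_vertices n) (crown_edges n) k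
           (\<lambda>v. if v < n then 1 else if v < 2 * n then 2 else 0)"
  unfolding proper_colouring_def
proof (intro conjI allI impI ballI)
  fix u w assume "{u, w} \<in> crown_edges n"
  then show "(if u < n then 1 else if u < 2 * n then 2 else 0) \<noteq>
             (if w < n then 1 else if w < 2 * n then 2 else (0::nat))"
    by (auto simp: crown_edge_iff)
qed (use assms in \<open>auto simp: crown_vertices_def\<close>)

lemma crown_chromatic_number_le: "chromatic_number (crown_vertices n) (crown_edges n) \<le> 2"
  unfolding chromatic_number_def
  by (rule Least_le) (use crown_two_colouring in blast)

lemma crown_colouring_forced_by_left_side:
  assumes c: "proper_colouring (crown_vertices n) (crown_edges n) n c"
    and left: "\<And>i. i < n \<Longrightarrow> c i = i + 1" and j: "j < n"
  shows "c (n + j) = j + 1"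
proof -
  define i where "i = c (n + j) - 1"
  have "c (n + j) \<in> {1..n}"
    using c j unfolding proper_colouring_def crown_vertices_def by simp
  then have i: "i < n" "c (n + j) = i + 1"
    unfolding i_def by auto
  have "i = j"
  proof (rule ccontr)
    assume "i \<noteq> j"
    then have "{i, n + j} \<in> crown_edges n"
      using i j by simp
    then have "c i \<noteq> c (n + j)"
      using c unfolding proper_colouring_def by blast
    then show False
      using left i by simp
  qed
  then show ?thesis
    using i by simp
qed

lemma crown_defining_set_left_side:
  "defining_set (crown_vertices n) (crown_edges n) n {..<n}
     (\<lambda>v. if v < n then v + 1 else if v < 2 * n then v - n + 1 else 0)"
  (is "defining_set ?V ?E n _ ?c")
  unfolding defining_set_def
proof (intro conjI allI impI)
  show "{..<n} \<subseteq> ?V"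
    unfolding crown_vertices_def by auto
  show "proper_colouring ?V ?E n ?c"
    unfolding proper_colouring_def
    by (auto simp: crown_vertices_def crown_edge_iff)
  fix c' assume c': "proper_colouring ?V ?E n c'" and left: "\<forall>v\<in>{..<n}. c' v = ?c v"
  show "c' = ?c"
  proof
    fix v
    show "c' v = ?c v"
    proof (cases "v < n")
      case True
      then show ?thesis
        using left by simp
    next
      case right: False
      show ?thesis
      proof (cases "v < 2 * n")
        case True
        have "c' (n + (v - n)) = v - n + 1"
          by (rule crown_colouring_forced_by_left_side[OF c']) (use left right True in auto)
        then show ?thesis
          using right True by simp
      next
        case False
        then show ?thesis
          using c' right unfolding proper_colouring_def crown_vertices_def by simp
      qed
    qed
  qed
qed

lemma sn_crown_le: "sn (crown_vertices n) (crown_edges n) n \<le> n"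
  using sn_le_defining_set[OF crown_defining_set_left_side] by simp

section \<open>Colourings of crown graphs with a small defining set\<close>

lemma double_card_image_le:
  assumes "finite A" and "\<And>x. x \<in> A \<Longrightarrow> \<exists>x'\<in>A. x' \<noteq> x \<and> f x' = f x"
  shows "2 * card (f ` A) \<le> card A"
proof -
  have "2 * card (f ` A) = (\<Sum>y\<in>f ` A. 2)"
    by simp
  also have "\<dots> \<le> (\<Sum>y\<in>f ` A. card {x \<in> A. f x = y})"
  proof (rule sum_mono)
    fix y assume "y \<in> f ` A"
    then obtain x where x: "x \<in> A" "f x = y"
      by blast
    then obtain x' where "x' \<in> A" "x' \<noteq> x" "f x' = y"
      using assms(2) by blast
    then have "{x, x'} \<subseteq> {x \<in> A. f x = y}"
      using x by auto
    then have "card {x, x'} \<le> card {x \<in> A. f x = y}"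
      using assms(1) by (intro card_mono) auto
    then show "2 \<le> card {x \<in> A. f x = y}"
      using \<open>x' \<noteq> x\<close> by simp
  qed
  also have "\<dots> = card A"
    using sum.image_gen[OF assms(1), of "\<lambda>_. 1::nat" f] by simp
  finally show ?thesis .
qed

text \<open>
  A proper k-colouring of the crown graph seen from its two sides: \<alpha> i and \<beta> j are the
  colours of the vertices i and n + j, and FL and FR are the indices of the uncoloured left and
  right vertices, each of which sees every colour other than its own.
\<close>

locale crown_colouring =
  fixes n k :: nat and \<alpha> \<beta> :: "nat \<Rightarrow> nat" and FL FR :: "nat set"
  assumes \<alpha>_range: "i < n \<Longrightarrow> \<alpha> i \<in> {1..k}"
    and \<beta>_range: "j < n \<Longrightarrow> \<beta> j \<in> {1..k}"
    and cross: "i < n \<Longrightarrow> j < n \<Longrightarrow> i \<noteq> j \<Longrightarrow> \<alpha> i \<noteq> \<beta> j"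
    and FL_subset: "FL \<subseteq> {..<n}"
    and FR_subset: "FR \<subseteq> {..<n}"
    and FL_sees: "i \<in> FL \<Longrightarrow> z \<in> {1..k} \<Longrightarrow> z \<noteq> \<alpha> i \<Longrightarrow> \<exists>j<n. j \<noteq> i \<and> \<beta> j = z"
    and FR_sees: "j \<in> FR \<Longrightarrow> z \<in> {1..k} \<Longrightarrow> z \<noteq> \<beta> j \<Longrightarrow> \<exists>i<n. i \<noteq> j \<and> \<alpha> i = z"

context crown_colouring
begin

lemma swap_sides: "crown_colouring n k \<beta> \<alpha> FR FL"
proof
  show "\<beta> i \<noteq> \<alpha> j" if "i < n" "j < n" "i \<noteq> j" for i j
    using cross that by metis
qed (fact \<alpha>_range \<beta>_range FL_subset FR_subset FL_sees FR_sees)+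

lemma matched_colour_private:
  assumes "i < n" "\<alpha> i = \<beta> i" "j < n" "j \<noteq> i"
  shows "\<alpha> j \<noteq> \<alpha> i" and "\<beta> j \<noteq> \<alpha> i"
  using assms cross by metis+

lemma unmatched_colour_unseen:
  assumes "i < n" "\<alpha> i \<noteq> \<beta> i" "j < n"
  shows "\<beta> j \<noteq> \<alpha> i"
  using assms cross[of i j] by (cases "j = i") auto

lemma exists_unmatched:
  assumes "k < n"
  shows "\<exists>i<n. \<alpha> i \<noteq> \<beta> i"
proof (rule ccontr)
  assume "\<not> ?thesis"
  then have matched: "\<alpha> i = \<beta> i" if "i < n" for i
    using that by blast
  have "inj_on \<alpha> {..<n}"
    using matched_colour_private(1) matched by (metis inj_onI lessThan_iff)
  then have "card {..<n} \<le> card {1..k}"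
    using \<alpha>_range by (intro card_inj_on_le) auto
  then show False
    using assms by simp
qed

lemma matched_not_free:
  assumes "k < n" "i < n" "\<alpha> i = \<beta> i"
  shows "i \<notin> FL"
proof
  assume "i \<in> FL"
  obtain j where j: "j < n" "\<alpha> j \<noteq> \<beta> j"
    using exists_unmatched assms(1) by blast
  have "\<alpha> j \<noteq> \<alpha> i"
    using matched_colour_private(1) assms j by metis
  then obtain l where "l < n" "\<beta> l = \<alpha> j"
    using FL_sees[OF \<open>i \<in> FL\<close> \<alpha>_range[OF j(1)]] by metis
  then show False
    using unmatched_colour_unseen j by blast
qed

lemma free_unmatched_colour:
  assumes "i \<in> FL" "\<alpha> i \<noteq> \<beta> i" "j < n" "\<alpha> j \<noteq> \<beta> j"
  shows "\<alpha> j = \<alpha> i"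
proof (rule ccontr)
  assume "\<alpha> j \<noteq> \<alpha> i"
  then obtain l where "l < n" "\<beta> l = \<alpha> j"
    using FL_sees[OF assms(1) \<alpha>_range[OF assms(3)]] by metis
  then show False
    using unmatched_colour_unseen assms(3,4) by blast
qed

lemma not_all_right_free:
  assumes "k < n" "n + 2 < 2 * k"
  shows "FR \<noteq> {..<n}"
proof
  assume all_free: "FR = {..<n}"
  have unmatched: "\<beta> i \<noteq> \<alpha> i" if "i < n" for i
    using crown_colouring.matched_not_free[OF swap_sides assms(1) that] that all_free by auto
  have "0 < n"
    using assms by linarith
  define y where "y = \<beta> 0"
  have \<beta>_const: "\<beta> j = y" if "j < n" for j
    unfolding y_def
    using crown_colouring.free_unmatched_colour[OF swap_sides, of 0 j] \<open>0 < n\<close> all_free unmatched that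
    by blast
  have "{1..k} - {y} \<subseteq> \<alpha> ` {..<n}"
  proof
    fix z assume "z \<in> {1..k} - {y}"
    then obtain i where "i < n" "\<alpha> i = z"
      using FR_sees[of 0 z] \<open>0 < n\<close> all_free \<beta>_const by auto
    then show "z \<in> \<alpha> ` {..<n}"
      by blast
  qed
  then have "card ({1..k} - {y}) \<le> card (\<alpha> ` {..<n})"
    by (rule card_mono[rotated]) simp
  moreover have "2 * card (\<alpha> ` {..<n}) \<le> card {..<n}"
  proof (rule double_card_image_le)
    fix i assume "i \<in> {..<n}"
    then have "\<exists>i'<n. i' \<noteq> i \<and> \<alpha> i' = \<alpha> i"
      using FR_sees[of i "\<alpha> i"] \<alpha>_range[of i] unmatched[of i] all_free by auto
    then show "\<exists>i'\<in>{..<n}. i' \<noteq> i \<and> \<alpha> i' = \<alpha> i"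
      by auto
  qed simp
  moreover have "y \<in> {1..k}"
    unfolding y_def using \<beta>_range \<open>0 < n\<close> .
  ultimately show False
    using assms by simp
qed

lemma FL_nonempty:
  assumes "k < n" "n + 2 < 2 * k" "n \<le> card FL + card FR"
  shows "FL \<noteq> {}"
proof
  assume "FL = {}"
  then have "card {..<n} \<le> card FR"
    using assms(3) by simp
  then have "FR = {..<n}"
    using card_subset_eq card_mono[OF finite_lessThan FR_subset] FR_subset
    by (metis le_antisym finite_lessThan)
  then show False
    using not_all_right_free assms(1,2) by simp
qed

lemma card_matched_ge:
  assumes "i \<in> FL" "\<alpha> i \<noteq> \<beta> i" "j \<in> FR" "\<alpha> j \<noteq> \<beta> j"
  shows "k \<le> card {l. l < n \<and> \<alpha> l = \<beta> l} + 2"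
proof -
  define M where "M = {l. l < n \<and> \<alpha> l = \<beta> l}"
  have "{1..k} \<subseteq> insert (\<alpha> i) (insert (\<beta> j) (\<alpha> ` M))"
  proof
    fix z assume z: "z \<in> {1..k}"
    show "z \<in> insert (\<alpha> i) (insert (\<beta> j) (\<alpha> ` M))"
    proof (cases "z = \<alpha> i")
      case False
      then obtain l where l: "l < n" "\<beta> l = z"
        using FL_sees[OF assms(1) z] by blast
      show ?thesis
      proof (cases "\<alpha> l = \<beta> l")
        case True
        then have "l \<in> M"
          using l unfolding M_def by simp
        moreover have "z = \<alpha> l"
          using True l by simp
        ultimately show ?thesis
          by blast
      next
        case False
        then have "\<beta> l = \<beta> j"
          using crown_colouring.free_unmatched_colour[OF swap_sides assms(3)] assms(4) l(1) by metis
        then show ?thesis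
          using l by simp
      qed
    qed simp
  qed
  then have "card {1..k} \<le> card (insert (\<alpha> i) (insert (\<beta> j) (\<alpha> ` M)))"
    by (rule card_mono[rotated]) (simp add: M_def)
  also have "\<dots> \<le> card (\<alpha> ` M) + 2"
    by (simp add: card_insert_if M_def)
  also have "\<dots> \<le> card M + 2"
    using card_image_le[of M \<alpha>] by (simp add: M_def)
  finally show ?thesis
    unfolding M_def by simp
qed

lemma free_sides_eq_unmatched:
  assumes "k < n" "n + 4 \<le> 2 * k" "n \<le> card FL + card FR" "i \<in> FL" "j \<in> FR"
  shows "FL = {l. l < n \<and> \<alpha> l \<noteq> \<beta> l}" and "FR = {l. l < n \<and> \<alpha> l \<noteq> \<beta> l}"
proof -
  define M where "M = {l. l < n \<and> \<alpha> l = \<beta> l}"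
  define U where "U = {l. l < n \<and> \<alpha> l \<noteq> \<beta> l}"
  have FL_U: "FL \<subseteq> U" and FR_U: "FR \<subseteq> U"
    using matched_not_free crown_colouring.matched_not_free[OF swap_sides] assms(1) FL_subset FR_subset
    unfolding U_def by fastforce+
  then have "k \<le> card M + 2"
    using card_matched_ge assms(4,5) unfolding M_def U_def by blast
  moreover have "card M + card U = n"
  proof -
    have "M \<union> U = {..<n}" "M \<inter> U = {}"
      unfolding M_def U_def by auto
    then show ?thesis
      using card_Un_disjoint[of M U] unfolding M_def U_def by simp
  qed
  moreover have "card FL \<le> card U" "card FR \<le> card U"
    using FL_U FR_U by (simp_all add: card_mono U_def)
  ultimately have "card FL = card U" "card FR = card U"
    using assms(2,3) by linarith+
  then show "FL = U" "FR = U"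
    using card_subset_eq FL_U FR_U by (metis finite_Collect_conjI finite_lessThan lessThan_def U_def)+
qed

lemma free_colour_pair:
  assumes "k < n" "n + 4 \<le> 2 * k" "n \<le> card FL + card FR"
  obtains x y where "x \<in> {1..k}" "y \<in> {1..k}" "x \<noteq> y" "\<exists>i<n. \<alpha> i = x"
    "\<And>i. i < n \<Longrightarrow> \<alpha> i \<in> {x, y} \<Longrightarrow> i \<in> FL"
    "\<And>j. j < n \<Longrightarrow> \<beta> j \<in> {x, y} \<Longrightarrow> j \<in> FR"
proof -
  have "FL \<noteq> {}" "FR \<noteq> {}"
    using FL_nonempty crown_colouring.FL_nonempty[OF swap_sides] assms by (simp_all add: add.commute)
  then obtain i j where ij: "i \<in> FL" "j \<in> FR"
    by blast
  note free_sides = free_sides_eq_unmatched[OF assms ij]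
  have i: "i < n" "\<alpha> i \<noteq> \<beta> i" and j: "j < n" "\<alpha> j \<noteq> \<beta> j"
    using ij free_sides by auto
  have matched_avoids: "\<alpha> l \<notin> {\<alpha> i, \<beta> j}" if "l < n" "\<alpha> l = \<beta> l" for l
  proof
    have "i \<noteq> l" "j \<noteq> l"
      using i j that by auto
    moreover assume "\<alpha> l \<in> {\<alpha> i, \<beta> j}"
    ultimately show False
      using matched_colour_private[OF that, of i] matched_colour_private[OF that, of j] i(1) j(1)
      by auto
  qed
  show thesis
  proof (rule that[of "\<alpha> i" "\<beta> j"])
    show "\<alpha> i \<in> {1..k}" "\<beta> j \<in> {1..k}"
      using \<alpha>_range \<beta>_range i j by simp_all
    show "\<alpha> i \<noteq> \<beta> j"
      using cross i j by (cases "i = j") auto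
    show "\<exists>i'<n. \<alpha> i' = \<alpha> i"
      using i by blast
    show "l \<in> FL" if "l < n" "\<alpha> l \<in> {\<alpha> i, \<beta> j}" for l
      using matched_avoids[of l] that free_sides by auto
    show "l \<in> FR" if "l < n" "\<beta> l \<in> {\<alpha> i, \<beta> j}" for l
      using matched_avoids[of l] that free_sides by auto
  qed
qed

end

lemma crown_defining_set_colouring:
  assumes def: "defining_set (crown_vertices n) (crown_edges n) k S c"
  shows "crown_colouring n k c (\<lambda>j. c (n + j)) {i. i < n \<and> i \<notin> S} {j. j < n \<and> n + j \<notin> S}"
proof
  have c: "proper_colouring (crown_vertices n) (crown_edges n) k c"
    using def by (rule defining_setD)
  show "c i \<in> {1..k}" if "i < n" for i
    using c that unfolding proper_colouring_def crown_vertices_def by simp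
  show "c (n + j) \<in> {1..k}" if "j < n" for j
    using c that unfolding proper_colouring_def crown_vertices_def by simp
  show "c i \<noteq> c (n + j)" if "i < n" "j < n" "i \<noteq> j" for i j
    using c that unfolding proper_colouring_def by simp
  show "\<exists>j<n. j \<noteq> i \<and> c (n + j) = z"
    if "i \<in> {i. i < n \<and> i \<notin> S}" "z \<in> {1..k}" "z \<noteq> c i" for i z
  proof -
    have "\<exists>w. {i, w} \<in> crown_edges n \<and> c w = z"
      by (rule defining_set_free_vertex_sees_all_colours[OF def crown_simple])
        (use that in \<open>auto simp: crown_vertices_def\<close>)
    then obtain w where "{i, w} \<in> crown_edges n" "c w = z"
      by blast
    then show ?thesis
      using that by (auto simp: crown_edge_iff)
  qed
  show "\<exists>i<n. i \<noteq> j \<and> c i = z"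
    if "j \<in> {j. j < n \<and> n + j \<notin> S}" "z \<in> {1..k}" "z \<noteq> c (n + j)" for j z
  proof -
    have "\<exists>w. {n + j, w} \<in> crown_edges n \<and> c w = z"
      by (rule defining_set_free_vertex_sees_all_colours[OF def crown_simple])
        (use that in \<open>auto simp: crown_vertices_def\<close>)
    then obtain w where "{n + j, w} \<in> crown_edges n" "c w = z"
      by blast
    then show ?thesis
      using that by (auto simp: crown_edge_iff)
  qed
qed auto

lemma card_crown_free_vertices:
  assumes "S \<subseteq> crown_vertices n"
  shows "2 * n - card S \<le> card {i. i < n \<and> i \<notin> S} + card {j. j < n \<and> n + j \<notin> S}"
proof -
  let ?FL = "{i. i < n \<and> i \<notin> S}" and ?FR = "{j. j < n \<and> n + j \<notin> S}"
  have "crown_vertices n - S \<subseteq> ?FL \<union> (\<lambda>j. n + j) ` ?FR"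
  proof
    fix v assume v: "v \<in> crown_vertices n - S"
    show "v \<in> ?FL \<union> (\<lambda>j. n + j) ` ?FR"
    proof (cases "v < n")
      case False
      then have "v - n \<in> ?FR" "v = n + (v - n)"
        using v unfolding crown_vertices_def by auto
      then show ?thesis
        by blast
    qed (use v in simp)
  qed
  then have "card (crown_vertices n - S) \<le> card (?FL \<union> (\<lambda>j. n + j) ` ?FR)"
    by (rule card_mono[rotated]) simp
  also have "\<dots> \<le> card ?FL + card ((\<lambda>j. n + j) ` ?FR)"
    by (rule card_Un_le)
  also have "\<dots> \<le> card ?FL + card ?FR"
    using card_image_le[of ?FR "\<lambda>j. n + j"] by simp
  finally show ?thesis
    using assms by (simp add: card_Diff_subset crown_vertices_def finite_subset)
qed

lemma crown_defining_set_card_gt: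
  assumes def: "defining_set (crown_vertices n) (crown_edges n) k S c"
    and "k < n" "n + 4 \<le> 2 * k"
  shows "n < card S"
proof (rule ccontr)
  assume small: "\<not> n < card S"
  define FL where "FL = {i. i < n \<and> i \<notin> S}"
  define FR where "FR = {j. j < n \<and> n + j \<notin> S}"
  interpret crown_colouring n k c "\<lambda>j. c (n + j)" FL FR
    unfolding FL_def FR_def using def by (rule crown_defining_set_colouring)
  have S: "S \<subseteq> crown_vertices n"
    using def by (rule defining_setD)
  then have "n \<le> card FL + card FR"
    using card_crown_free_vertices[OF S] small unfolding FL_def FR_def by linarith
  then obtain x y where xy: "x \<in> {1..k}" "y \<in> {1..k}" "x \<noteq> y" "\<exists>i<n. c i = x"
    and left_free: "\<And>i. i < n \<Longrightarrow> c i \<in> {x, y} \<Longrightarrow> i \<in> FL"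
    and right_free: "\<And>j. j < n \<Longrightarrow> c (n + j) \<in> {x, y} \<Longrightarrow> j \<in> FR"
    using free_colour_pair assms(2,3) by blast
  obtain i where "i < n" "c i = x"
    using xy(4) by blast
  then obtain s where s: "s \<in> S" "c s \<in> {x, y}"
    using defining_set_meets_colour_pair[OF def xy(1-3), of i] unfolding crown_vertices_def by auto
  show False
  proof (cases "s < n")
    case True
    then show False
      using left_free[of s] s unfolding FL_def by simp
  next
    case False
    then have "s - n < n" "s = n + (s - n)"
      using s S unfolding crown_vertices_def by auto
    then show False
      using right_free[of "s - n"] s unfolding FR_def by simp
  qed
qed

lemma sn_crown_gt:
  assumes "k < n" "n + 4 \<le> 2 * k"
  shows "n < sn (crown_vertices n) (crown_edges n) k"
proof -
  have "2 \<le> k"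
    using assms by linarith
  then obtain S c where "defining_set (crown_vertices n) (crown_edges n) k S c"
    and "card S = sn (crown_vertices n) (crown_edges n) k"
    by (rule sn_attained[OF crown_two_colouring])
  then show ?thesis
    using crown_defining_set_card_gt assms by metis
qed

theorem theorem6:
  shows "\<exists>(V :: nat set) (E :: nat set set) (k :: nat).
           simple_graph V E \<and> connected_graph V E \<and> bipartite_graph V E \<and>
           k - 1 \<ge> chromatic_number V E \<and> sn V E k < sn V E (k - 1)"
proof (intro exI[of _ "crown_vertices 6"] exI[of _ "crown_edges 6"] exI[of _ "6::nat"] conjI)
  show "simple_graph (crown_vertices 6) (crown_edges 6)"
    by (rule crown_simple)
  show "connected_graph (crown_vertices 6) (crown_edges 6)"
    by (rule crown_connected) simp
  show "bipartite_graph (crown_vertices 6) (crown_edges 6)"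
    by (rule crown_bipartite)
  show "6 - 1 \<ge> chromatic_number (crown_vertices 6) (crown_edges 6)"
    using crown_chromatic_number_le[of 6] by simp
  show "sn (crown_vertices 6) (crown_edges 6) 6 < sn (crown_vertices 6) (crown_edges 6) (6 - 1)"
    using sn_crown_le[of 6] sn_crown_gt[of 5 6] by simp
qed

end
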